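(* Let $R_{\rm d}$ and $R_{\rm o}$ be real skew-symmetric $n\times n$ matrices such that $R\equiv\sigma^0\otimes R_{\rm d}+\sigma^x\otimes R_{\rm o}=\begin{bmatrix}R_{\rm d}&R_{\rm o}\\R_{\rm o}&R_{\rm d}\end{bmatrix}$ is unitary and $\mathrm{Pf}\,R=-1$. Then $\det R_{\rm d}=0$.
   Context: $\sigma^0$ is the $2\times2$ identity, $\sigma^x=\begin{bmatrix}0&1\\1&0\end{bmatrix}$, and $\mathrm{Pf}$ denotes the Pfaffian. *)

theory Defs
  imports "Jordan_Normal_Form.Determinant"
begin

definition pfaffian :: "real mat \<Rightarrow> real" where
  "pfaffian A = (let m = dim_row A div 2 in
     (\<Sum> p \<in> {p. p permutes {0 ..< 2 * m}}.
        signof p * (\<Prod> i = 0 ..< m. A $$ (p (2 * i), p (2 * i + 1))))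
     / (2 ^ m * fact m))"

definition skew_symmetric :: "real mat \<Rightarrow> bool" where
  "skew_symmetric A \<longleftrightarrow> transpose_mat A = - A"

text \<open>For real matrices, unitary means R R^* = 1 with R^* = R^T (conjugation is trivial).\<close>
definition unitary_real :: "real mat \<Rightarrow> bool" where
  "unitary_real R \<longleftrightarrow> (\<exists>k. R \<in> carrier_mat k k \<and> R * transpose_mat R = 1\<^sub>m k)"

end

theory Submission
  imports Defs
begin

text \<open>Suppose \<open>det Rd \<noteq> 0\<close>. Then \<open>n = 2k\<close> is even and \<open>Pf Rd \<noteq> 0\<close>. Conjugating
  \<open>R\<close> by \<open>diag(1, -1)\<close> gives a second orthogonal skew-symmetric matrix
  \<open>E = [[Rd, -Ro], [-Ro, Rd]]\<close>, and \<open>R + E = diag(2 Rd, 2 Rd)\<close> has Pfaffian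
  \<open>(2^k Pf Rd)^2 > 0\<close>. On the other hand, for orthogonal \<open>P\<close> and \<open>Q\<close> the matrices
  \<open>P + t Q\<close>, \<open>0 \<le> t < 1\<close>, are nonsingular because \<open>|P v| = |v| > |t Q v|\<close> for
  \<open>v \<noteq> 0\<close>; when \<open>P\<close> and \<open>Q\<close> are skew-symmetric their Pfaffians therefore never
  vanish, and by continuity \<open>Pf P\<close> and \<open>Pf (P + Q)\<close> cannot have opposite signs. For
  \<open>P = R\<close>, \<open>Pf R = -1\<close> contradicts this.

  That a nonsingular skew-symmetric matrix has nonzero Pfaffian follows from the congruence
  formula \<open>Pf (M A M\<^sup>T) = det M Pf A\<close>: the congruence of the standard symplectic form by
  \<open>[[S, 1], [S, -1]]\<close> is \<open>diag(2 S, -2 S)\<close>, which gives \<open>Pf S ^ 2 = \<plusminus> det S\<close>.\<close>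

section \<open>Pfaffians of index functions\<close>

definition pfaffian_sum :: "nat \<Rightarrow> (nat \<Rightarrow> nat \<Rightarrow> real) \<Rightarrow> real" where
  "pfaffian_sum m a = (\<Sum>p \<in> {p. p permutes {0..<2 * m}}.
     signof p * (\<Prod>i = 0..<m. a (p (2 * i)) (p (2 * i + 1))))"

lemma pfaffian_eq_pfaffian_sum:
  assumes "A \<in> carrier_mat (2 * m) (2 * m)"
  shows "pfaffian A = pfaffian_sum m (\<lambda>i j. A $$ (i, j)) / (2 ^ m * fact m)"
  using assms unfolding pfaffian_def pfaffian_sum_def Let_def by simp

lemma pfaffian_sum_cong:
  assumes "\<And>i j. i < 2 * m \<Longrightarrow> j < 2 * m \<Longrightarrow> a i j = b i j"
  shows "pfaffian_sum m a = pfaffian_sum m b"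
  unfolding pfaffian_sum_def
proof (intro sum.cong refl arg_cong[where f = "\<lambda>x. _ * x"] prod.cong)
  fix p i assume "p \<in> {p. p permutes {0..<2 * m}}" and "i \<in> {0..<m}"
  then have "p (2 * i) < 2 * m" "p (2 * i + 1) < 2 * m"
    using permutes_in_image[of p "{0..<2 * m}"] by auto
  then show "a (p (2 * i)) (p (2 * i + 1)) = b (p (2 * i)) (p (2 * i + 1))"
    using assms by blast
qed

lemma pfaffian_sum_scale: "pfaffian_sum m (\<lambda>i j. c * a i j) = c ^ m * pfaffian_sum m a"
  unfolding pfaffian_sum_def sum_distrib_left prod.distrib by (simp add: ac_simps)

lemma pfaffian_sum_0: "pfaffian_sum 0 a = 1"
  unfolding pfaffian_sum_def by simp

lemma pfaffian_sum_permute: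
  assumes pp: "pp permutes {0..<2 * m}"
  shows "pfaffian_sum m (\<lambda>i j. a (pp i) (pp j)) = signof pp * pfaffian_sum m a"
proof -
  have "pfaffian_sum m a = (\<Sum>p \<in> {p. p permutes {0..<2 * m}}.
      signof (pp \<circ> p) * (\<Prod>i = 0..<m. a ((pp \<circ> p) (2 * i)) ((pp \<circ> p) (2 * i + 1))))"
    unfolding pfaffian_sum_def by (rule setum_permutations_compose_left[OF pp])
  also have "\<dots> = signof pp * pfaffian_sum m (\<lambda>i j. a (pp i) (pp j))"
    unfolding pfaffian_sum_def sum_distrib_left
    by (intro sum.cong refl) (simp add: signof_compose[OF pp])
  finally have a: "pfaffian_sum m a = signof pp * pfaffian_sum m (\<lambda>i j. a (pp i) (pp j))" .
  have "signof pp * signof pp = (1 :: real)"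
    using signof_pm_one[of pp, where 'a = real] by auto
  then have "pfaffian_sum m (\<lambda>i j. a (pp i) (pp j)) =
      (signof pp * signof pp) * pfaffian_sum m (\<lambda>i j. a (pp i) (pp j))"
    by (simp only: mult_1)
  also have "\<dots> = signof pp * pfaffian_sum m a"
    unfolding a by (simp only: mult.assoc)
  finally show ?thesis .
qed

lemma sum_permutes_Suc:
  "(\<Sum>p \<in> {p. p permutes {0..<Suc n}}. h p) =
     (\<Sum>j = 0..<Suc n. \<Sum>q \<in> {q. q permutes {0..<n}}. h (permutation_insert n j q))"
proof -
  let ?N = "{0..<Suc n}"
  let ?P = "\<lambda>j. {p. p permutes ?N \<and> p n = j}"
  have "{p. p permutes ?N} = (\<Union>j \<in> ?N. ?P j)"
    using permutes_in_image[of _ ?N n] by auto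
  then have "(\<Sum>p \<in> {p. p permutes ?N}. h p) = (\<Sum>j \<in> ?N. \<Sum>p \<in> ?P j. h p)"
    using finite_permutations[of ?N] by (simp only:) (rule sum.UNION_disjoint; auto)
  also have "\<dots> = (\<Sum>j \<in> ?N. \<Sum>q \<in> {q. q permutes {0..<n}}. h (permutation_insert n j q))"
  proof (rule sum.cong [OF refl])
    fix j assume j: "j \<in> ?N"
    then have "(\<Sum>p \<in> ?P j. h p) = sum h (permutation_insert n j ` {q. q permutes {0..<n}})"
      by (simp add: permutation_fix)
    also have "\<dots> = (\<Sum>q \<in> {q. q permutes {0..<n}}. h (permutation_insert n j q))"
      using j by (subst sum.reindex) (auto intro: permutation_insert_inj_on)
    finally show "(\<Sum>p \<in> ?P j. h p) = \<dots>" .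
  qed
  finally show ?thesis .
qed

definition minor_index :: "nat \<Rightarrow> nat \<Rightarrow> nat \<Rightarrow> nat" where
  "minor_index y x r = insert_index y (insert_index x r)"

definition minor :: "(nat \<Rightarrow> nat \<Rightarrow> 'a) \<Rightarrow> nat \<Rightarrow> nat \<Rightarrow> nat \<Rightarrow> nat \<Rightarrow> 'a" where
  "minor a y x r c = a (minor_index y x r) (minor_index y x c)"

lemma signof_permutation_insert_twice:
  assumes "q permutes {0..<n}" "x < Suc n" "y < Suc (Suc n)"
  shows "signof (permutation_insert (Suc n) y (permutation_insert n x q)) =
    (-1 :: real) ^ (y + x + 1) * signof q"
proof -
  have "permutation_insert n x q permutes {0..<Suc n}"
    using assms by (intro permutation_insert_permutes) auto
  then have "signof (permutation_insert (Suc n) y (permutation_insert n x q)) =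
      (-1 :: real) ^ (Suc n + y) * ((-1) ^ (n + x) * signof q)"
    using assms by (simp add: signof_permutation_insert)
  also have "\<dots> = (-1) ^ (Suc n + y + (n + x)) * signof q"
    by (simp only: power_add mult.assoc)
  also have "Suc n + y + (n + x) = 2 * n + (y + x + 1)"
    by simp
  finally show ?thesis by (simp add: power_add power_mult)
qed

lemma permutation_insert_below: "i < n \<Longrightarrow> permutation_insert n j q i = insert_index j (q i)"
  unfolding permutation_insert_expand insert_index_def by auto

lemma signof_prod_permutation_insert_twice:
  fixes a :: "nat \<Rightarrow> nat \<Rightarrow> real"
  assumes q: "q permutes {0..<2 * m}" and x: "x < 2 * m + 1" and y: "y < 2 * m + 2"
  defines "p \<equiv> permutation_insert (Suc (2 * m)) y (permutation_insert (2 * m) x q)"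
  shows "signof p * (\<Prod>i = 0..<Suc m. a (p (2 * i)) (p (2 * i + 1))) =
    (-1) ^ (y + x + 1) * a (insert_index y x) y *
      (signof q * (\<Prod>i = 0..<m. minor a y x (q (2 * i)) (q (2 * i + 1))))"
proof -
  have "p i = minor_index y x (q i)" if "i < 2 * m" for i
    using that by (simp add: p_def permutation_insert_below minor_index_def)
  then have "(\<Prod>i = 0..<m. a (p (2 * i)) (p (2 * i + 1))) =
      (\<Prod>i = 0..<m. minor a y x (q (2 * i)) (q (2 * i + 1)))"
    by (intro prod.cong) (auto simp: minor_def)
  moreover have "p (2 * m) = insert_index y x" "p (2 * m + 1) = y"
    by (simp_all add: p_def permutation_insert_below)
  moreover have "signof p = (-1 :: real) ^ (y + x + 1) * signof q"
    unfolding p_def using signof_permutation_insert_twice[OF q, of x y] x y by simp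
  moreover have "(\<Prod>i = 0..<Suc m. a (p (2 * i)) (p (2 * i + 1))) =
      (\<Prod>i = 0..<m. a (p (2 * i)) (p (2 * i + 1))) * a (p (2 * m)) (p (2 * m + 1))"
    by simp
  ultimately show ?thesis
    by simp
qed

text \<open>Expansion along the last pair: the permutation sends \<open>2 m + 1\<close> to \<open>y\<close> and \<open>2 m\<close> to
  \<open>insert_index y x\<close>, and \<open>minor a y x\<close> is \<open>a\<close> with these two rows and columns deleted.\<close>

lemma pfaffian_sum_Suc:
  "pfaffian_sum (Suc m) a = (\<Sum>y = 0..<2 * m + 2. \<Sum>x = 0..<2 * m + 1.
     (-1) ^ (y + x + 1) * a (insert_index y x) y * pfaffian_sum m (minor a y x))"
proof -
  let ?ins = "\<lambda>y x q. permutation_insert (Suc (2 * m)) y (permutation_insert (2 * m) x q)"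
  define h where "h p = signof p * (\<Prod>i = 0..<Suc m. a (p (2 * i)) (p (2 * i + 1)))" for p
  have "pfaffian_sum (Suc m) a = (\<Sum>p \<in> {p. p permutes {0..<Suc (Suc (2 * m))}}. h p)"
    unfolding pfaffian_sum_def h_def by simp
  also have "\<dots> = (\<Sum>y = 0..<2 * m + 2. \<Sum>x = 0..<2 * m + 1.
      \<Sum>q \<in> {q. q permutes {0..<2 * m}}. h (?ins y x q))"
    by (simp add: sum_permutes_Suc)
  also have "\<dots> = (\<Sum>y = 0..<2 * m + 2. \<Sum>x = 0..<2 * m + 1.
     (-1) ^ (y + x + 1) * a (insert_index y x) y * pfaffian_sum m (minor a y x))"
  proof (intro sum.cong refl)
    fix y x assume y: "y \<in> {0..<2 * m + 2}" and x: "x \<in> {0..<2 * m + 1}"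
    show "(\<Sum>q \<in> {q. q permutes {0..<2 * m}}. h (?ins y x q)) =
        (-1) ^ (y + x + 1) * a (insert_index y x) y * pfaffian_sum m (minor a y x)"
      unfolding pfaffian_sum_def sum_distrib_left
    proof (intro sum.cong refl)
      fix q assume "q \<in> {q. q permutes {0..<2 * m}}"
      with x y show "h (?ins y x q) = (-1) ^ (y + x + 1) * a (insert_index y x) y *
          (signof q * (\<Prod>i = 0..<m. minor a y x (q (2 * i)) (q (2 * i + 1))))"
        unfolding h_def by (intro signof_prod_permutation_insert_twice) auto
    qed
  qed
  finally show ?thesis .
qed

lemma pfaffian_sum_1: "pfaffian_sum 1 a = a 0 1 - a 1 0"
  using pfaffian_sum_Suc[of 0 a] by (simp add: pfaffian_sum_0 insert_index_def)

definition block_diag_fun ::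
    "(nat \<Rightarrow> nat \<Rightarrow> 'a :: zero) \<Rightarrow> (nat \<Rightarrow> nat \<Rightarrow> 'a) \<Rightarrow> nat \<Rightarrow> nat \<Rightarrow> nat \<Rightarrow> 'a" where
  "block_diag_fun X Y k r c =
     (if r < k \<and> c < k then X r c else if k \<le> r \<and> k \<le> c then Y (r - k) (c - k) else 0)"

lemma block_diag_fun_0 [simp]: "block_diag_fun X Y 0 = Y"
  by (intro ext) (simp add: block_diag_fun_def)

lemma minor_index_high:
  "r < k \<Longrightarrow> minor_index (y + k) (x + k) r = r"
  "k \<le> r \<Longrightarrow> minor_index (y + k) (x + k) r = minor_index y x (r - k) + k"
  by (auto simp: minor_index_def insert_index_def)

lemma minor_index_low:
  assumes "y < k + 2" "x < k + 1"
  shows "r < k \<Longrightarrow> minor_index y x r < k + 2" "k \<le> r \<Longrightarrow> minor_index y x r = r + 2"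
  using assms by (auto simp: minor_index_def insert_index_def)

lemma minor_block_diag_fun_low:
  assumes "y < k + 2" "x < k + 1"
  shows "minor (block_diag_fun X Y (k + 2)) y x = block_diag_fun (minor X y x) Y k"
proof (intro ext)
  fix r c
  show "minor (block_diag_fun X Y (k + 2)) y x r c = block_diag_fun (minor X y x) Y k r c"
    using minor_index_low[OF assms, where r = r] minor_index_low[OF assms, where r = c]
    by (cases "r < k"; cases "c < k") (simp_all add: minor_def block_diag_fun_def)
qed

lemma minor_block_diag_fun_high:
  "minor (block_diag_fun X Y k) (y + k) (x + k) = block_diag_fun X (minor Y y x) k"
proof (intro ext)
  fix r c
  show "minor (block_diag_fun X Y k) (y + k) (x + k) r c = block_diag_fun X (minor Y y x) k r c"
    using minor_index_high[where r = r] minor_index_high[where r = c]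
    by (cases "r < k"; cases "c < k") (simp_all add: minor_def block_diag_fun_def)
qed

lemma sum_pairs_block_diag_fun:
  fixes F :: "nat \<Rightarrow> nat \<Rightarrow> 'a :: semiring_0"
  shows "(\<Sum>y = 0..<k + l. \<Sum>x = 0..<k + l - 1. F y x * block_diag_fun X Y k (insert_index y x) y) =
    (\<Sum>y = 0..<k. \<Sum>x = 0..<k - 1. F y x * X (insert_index y x) y) +
    (\<Sum>y = 0..<l. \<Sum>x = 0..<l - 1. F (y + k) (x + k) * Y (insert_index y x) y)"
proof -
  let ?G = "\<lambda>y x. F y x * block_diag_fun X Y k (insert_index y x) y"
  have low: "(\<Sum>x = 0..<k + l - 1. ?G y x) = (\<Sum>x = 0..<k - 1. F y x * X (insert_index y x) y)"
    if "y < k" for y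
  proof -
    have "(\<Sum>x = 0..<k + l - 1. ?G y x) = (\<Sum>x = 0..<k - 1. ?G y x) + (\<Sum>x = k - 1..<k + l - 1. ?G y x)"
      by (rule sum.atLeastLessThan_concat [symmetric]) auto
    moreover have "?G y x = 0" if "k - 1 \<le> x" for x
      using that \<open>y < k\<close> by (auto simp: insert_index_def block_diag_fun_def)
    moreover have "?G y x = F y x * X (insert_index y x) y" if "x < k - 1" for x
      using that \<open>y < k\<close> by (auto simp: insert_index_def block_diag_fun_def)
    ultimately show ?thesis by simp
  qed
  have high: "(\<Sum>x = 0..<k + l - 1. ?G (y + k) x) =
      (\<Sum>x = 0..<l - 1. F (y + k) (x + k) * Y (insert_index y x) y)"
    if "y < l" for y
  proof -
    have "(\<Sum>x = 0..<k + l - 1. ?G (y + k) x) =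
        (\<Sum>x = 0..<k. ?G (y + k) x) + (\<Sum>x = k..<k + l - 1. ?G (y + k) x)"
      using that by (intro sum.atLeastLessThan_concat [symmetric]) auto
    moreover have "?G (y + k) x = 0" if "x < k" for x
      using that by (auto simp: insert_index_def block_diag_fun_def)
    moreover have "(\<Sum>x = k..<k + l - 1. ?G (y + k) x) = (\<Sum>x = 0..<l - 1. ?G (y + k) (x + k))"
      using that sum.shift_bounds_nat_ivl[of "?G (y + k)" 0 k "l - 1"] by (simp add: ac_simps)
    moreover have "?G (y + k) (x + k) = F (y + k) (x + k) * Y (insert_index y x) y" for x
      by (auto simp: insert_index_def block_diag_fun_def)
    ultimately show ?thesis by simp
  qed
  have "(\<Sum>y = 0..<k + l. \<Sum>x = 0..<k + l - 1. ?G y x) =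
      (\<Sum>y = 0..<k. \<Sum>x = 0..<k + l - 1. ?G y x) + (\<Sum>y = k..<k + l. \<Sum>x = 0..<k + l - 1. ?G y x)"
    by (rule sum.atLeastLessThan_concat [symmetric]) auto
  also have "(\<Sum>y = k..<k + l. \<Sum>x = 0..<k + l - 1. ?G y x) =
      (\<Sum>y = 0..<l. \<Sum>x = 0..<k + l - 1. ?G (y + k) x)"
    using sum.shift_bounds_nat_ivl[of "\<lambda>y. \<Sum>x = 0..<k + l - 1. ?G y x" 0 k l] by (simp add: add.commute)
  finally show ?thesis using low high by simp
qed

lemma pfaffian_sum_Suc_scaled_minors:
  assumes "\<And>y x. y < 2 * m + 2 \<Longrightarrow> x < 2 * m + 1 \<Longrightarrow> f y x = c * pfaffian_sum m (minor X y x)"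
  shows "(\<Sum>y = 0..<2 * m + 2. \<Sum>x = 0..<2 * m + 1. (-1) ^ (y + x + 1) * f y x * X (insert_index y x) y) =
    c * pfaffian_sum (Suc m) X"
  unfolding pfaffian_sum_Suc sum_distrib_left using assms by (intro sum.cong refl) (simp add: ac_simps)

lemma pfaffian_sum_block_diag_Suc:
  assumes IH: "\<And>a b X Y. a + b = m \<Longrightarrow>
      pfaffian_sum m (block_diag_fun X Y (2 * a)) =
        real (m choose a) * pfaffian_sum a X * pfaffian_sum b Y"
    and m: "m = a + b + 1"
  shows "pfaffian_sum (Suc m) (block_diag_fun X Y (2 * Suc a)) =
    real (Suc m choose Suc a) * pfaffian_sum (Suc a) X * pfaffian_sum (Suc b) Y"
proof -
  define k where "k = 2 * a + 2"
  have k: "k = 2 * Suc a" by (simp add: k_def)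
  define d where "d = block_diag_fun X Y k"
  define f where "f y x = pfaffian_sum m (minor d y x)" for y x
  have "pfaffian_sum (Suc m) d =
      (\<Sum>y = 0..<k + (2 * b + 2). \<Sum>x = 0..<k + (2 * b + 2) - 1.
         (-1) ^ (y + x + 1) * f y x * d (insert_index y x) y)"
    unfolding pfaffian_sum_Suc f_def k_def m by (simp add: ac_simps)
  also have "\<dots> =
      (\<Sum>y = 0..<2 * a + 2. \<Sum>x = 0..<2 * a + 1. (-1) ^ (y + x + 1) * f y x * X (insert_index y x) y) +
      (\<Sum>y = 0..<2 * b + 2. \<Sum>x = 0..<2 * b + 1.
         (-1) ^ (y + x + 1) * f (y + k) (x + k) * Y (insert_index y x) y)"
    unfolding d_def by (subst sum_pairs_block_diag_fun) (simp_all add: k_def power_add power_mult)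
  also have "\<dots> = real (m choose a) * pfaffian_sum (Suc b) Y * pfaffian_sum (Suc a) X +
      real (m choose Suc a) * pfaffian_sum (Suc a) X * pfaffian_sum (Suc b) Y"
  proof (intro arg_cong2[where f = "(+)"] pfaffian_sum_Suc_scaled_minors)
    fix y x assume "y < 2 * a + 2" "x < 2 * a + 1"
    then have "minor d y x = block_diag_fun (minor X y x) Y (2 * a)"
      unfolding d_def k_def by (rule minor_block_diag_fun_low)
    then show "f y x = real (m choose a) * pfaffian_sum (Suc b) Y * pfaffian_sum a (minor X y x)"
      using IH[of a "Suc b" "minor X y x" Y] m by (simp add: f_def)
  next
    fix y x
    have "minor d (y + k) (x + k) = block_diag_fun X (minor Y y x) (2 * Suc a)"
      unfolding d_def k by (rule minor_block_diag_fun_high)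
    then show "f (y + k) (x + k) =
        real (m choose Suc a) * pfaffian_sum (Suc a) X * pfaffian_sum b (minor Y y x)"
      using IH[of "Suc a" b X "minor Y y x"] m by (simp add: f_def)
  qed
  also have "\<dots> = real (Suc m choose Suc a) * pfaffian_sum (Suc a) X * pfaffian_sum (Suc b) Y"
    by (simp add: algebra_simps)
  finally show ?thesis
    by (simp add: d_def k)
qed

lemma pfaffian_sum_block_diag:
  "pfaffian_sum (a + b) (block_diag_fun X Y (2 * a)) =
     real ((a + b) choose a) * pfaffian_sum a X * pfaffian_sum b Y"
proof (induction "a + b" arbitrary: a b X Y)
  case 0
  then show ?case by (simp add: pfaffian_sum_0)
next
  case (Suc m)
  consider "a = 0" | "b = 0" | a' b' where "a = Suc a'" "b = Suc b'"
    by (meson not0_implies_Suc)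
  then show ?case
  proof cases
    case 1
    then show ?thesis by (simp add: pfaffian_sum_0)
  next
    case 2
    then have "pfaffian_sum a (block_diag_fun X Y (2 * a)) = pfaffian_sum a X"
      by (intro pfaffian_sum_cong) (simp add: block_diag_fun_def)
    with 2 show ?thesis by (simp add: pfaffian_sum_0)
  next
    case 3
    have IH: "pfaffian_sum m (block_diag_fun X' Y' (2 * a'')) =
        real (m choose a'') * pfaffian_sum a'' X' * pfaffian_sum b'' Y'"
      if "a'' + b'' = m" for a'' b'' X' Y'
      using Suc.hyps(1)[of a'' b'' X' Y'] that by simp
    have "m = a' + b' + 1"
      using Suc.hyps(2) 3 by simp
    from pfaffian_sum_block_diag_Suc[OF IH this] show ?thesis
      using Suc.hyps(2) 3 by simp
  qed
qed

definition std_symplectic_fun :: "nat \<Rightarrow> nat \<Rightarrow> real" where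
  "std_symplectic_fun r c =
     (if even r \<and> c = r + 1 then 1 else if odd r \<and> r = c + 1 then -1 else 0)"

lemma block_diag_fun_std_symplectic_fun:
  "block_diag_fun std_symplectic_fun std_symplectic_fun 2 = std_symplectic_fun"
proof (intro ext)
  fix r c
  have shift: "std_symplectic_fun (r' + 2) (c' + 2) = std_symplectic_fun r' c'" for r' c'
    unfolding std_symplectic_fun_def by auto
  have "std_symplectic_fun r c = 0" if "r < 2 \<longleftrightarrow> \<not> c < 2"
    using that unfolding std_symplectic_fun_def by (cases r; cases c) auto
  then show "block_diag_fun std_symplectic_fun std_symplectic_fun 2 r c = std_symplectic_fun r c"
    using shift[of "r - 2" "c - 2"] by (auto simp: block_diag_fun_def simp del: add_2_eq_Suc')
qed

lemma pfaffian_sum_std_symplectic_fun: "pfaffian_sum m std_symplectic_fun = 2 ^ m * fact m"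
proof (induction m)
  case 0
  then show ?case by (simp add: pfaffian_sum_0)
next
  case (Suc m)
  have "pfaffian_sum (1 + m) (block_diag_fun std_symplectic_fun std_symplectic_fun (2 * 1)) =
      real ((1 + m) choose 1) * pfaffian_sum 1 std_symplectic_fun * pfaffian_sum m std_symplectic_fun"
    by (rule pfaffian_sum_block_diag)
  moreover have "pfaffian_sum 1 std_symplectic_fun = 2"
    unfolding pfaffian_sum_1 by (simp add: std_symplectic_fun_def)
  ultimately show ?case
    using Suc by (simp add: block_diag_fun_std_symplectic_fun)
qed

section \<open>The congruence formula\<close>

lemma prod_pairs:
  fixes f :: "nat \<Rightarrow> 'a :: comm_monoid_mult"
  shows "(\<Prod>i = 0..<m. f (2 * i) * f (2 * i + 1)) = (\<Prod>j = 0..<2 * m. f j)"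
  by (induction m) (simp_all add: ac_simps)

definition id_outside :: "nat \<Rightarrow> (nat \<Rightarrow> nat) \<Rightarrow> nat \<Rightarrow> nat" where
  "id_outside n f j = (if j < n then f j else j)"

lemma id_outside_permutes:
  assumes "f ` {0..<n} \<subseteq> {0..<n}" and "inj_on f {0..<n}"
  shows "id_outside n f permutes {0..<n}"
proof (rule bij_imp_permutes)
  have "inj_on (id_outside n f) {0..<n} = inj_on f {0..<n}"
    by (intro inj_on_cong) (simp add: id_outside_def)
  moreover have "id_outside n f ` {0..<n} = f ` {0..<n}"
    by (intro image_cong) (simp_all add: id_outside_def)
  moreover have "f ` {0..<n} = {0..<n}"
    using assms by (intro endo_inj_surj) auto
  ultimately show "bij_betw (id_outside n f) {0..<n} {0..<n}"
    using assms(2) by (simp add: bij_betw_def)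
qed (simp add: id_outside_def)

lemma det_mat_reindex_columns:
  fixes M :: "nat \<Rightarrow> nat \<Rightarrow> 'a :: comm_ring_1"
  assumes f: "f ` {0..<n} \<subseteq> {0..<n}"
  shows "det (mat n n (\<lambda>(r, c). M r (f c))) =
    (if inj_on f {0..<n} then signof (id_outside n f) * det (mat n n (\<lambda>(r, c). M r c)) else 0)"
proof (cases "inj_on f {0..<n}")
  case True
  let ?p = "id_outside n f"
  let ?Mt = "transpose_mat (mat n n (\<lambda>(r, c). M r c))"
  have p: "?p permutes {0..<n}"
    using f True by (rule id_outside_permutes)
  have "transpose_mat (mat n n (\<lambda>(r, c). M r (f c))) = mat n n (\<lambda>(i, j). ?Mt $$ (?p i, j))"
  proof (rule eq_matI)
    fix i j assume "i < dim_row (mat n n (\<lambda>(i, j). ?Mt $$ (?p i, j)))"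
      and "j < dim_col (mat n n (\<lambda>(i, j). ?Mt $$ (?p i, j)))"
    moreover from this have "?p i < n"
      using permutes_in_image[OF p, of i] by simp
    ultimately show "transpose_mat (mat n n (\<lambda>(r, c). M r (f c))) $$ (i, j) =
        mat n n (\<lambda>(i, j). ?Mt $$ (?p i, j)) $$ (i, j)"
      by (simp add: id_outside_def)
  qed simp_all
  then have "det (mat n n (\<lambda>(r, c). M r (f c))) = det (mat n n (\<lambda>(i, j). ?Mt $$ (?p i, j)))"
    by (metis det_transpose mat_carrier)
  also have "\<dots> = signof ?p * det ?Mt"
    using p by (intro det_permute_rows) auto
  finally show ?thesis
    using True det_transpose[of "mat n n (\<lambda>(r, c). M r c)" n] by simp
next
  case False
  then obtain i j where "i < n" "j < n" "i \<noteq> j" "f i = f j"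
    by (auto simp: inj_on_def)
  then have "col (mat n n (\<lambda>(r, c). M r (f c))) i = col (mat n n (\<lambda>(r, c). M r (f c))) j"
    by (intro eq_vecI) simp_all
  with \<open>i < n\<close> \<open>j < n\<close> \<open>i \<noteq> j\<close> have "det (mat n n (\<lambda>(r, c). M r (f c))) = 0"
    by (intro det_identical_columns[of _ n i j]) simp_all
  with False show ?thesis by simp
qed

definition pair_seq :: "(nat \<Rightarrow> nat \<times> nat) \<Rightarrow> nat \<Rightarrow> nat" where
  "pair_seq h j = (if even j then fst (h (j div 2)) else snd (h (j div 2)))"

definition pairs_of_perm :: "nat \<Rightarrow> (nat \<Rightarrow> nat) \<Rightarrow> nat \<Rightarrow> nat \<times> nat" where
  "pairs_of_perm m p i = (if i < m then (p (2 * i), p (2 * i + 1)) else undefined)"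

lemma pair_seq_even [simp]: "pair_seq h (2 * i) = fst (h i)"
  and pair_seq_odd [simp]: "pair_seq h (Suc (2 * i)) = snd (h i)"
  by (simp_all add: pair_seq_def)

lemma pair_seq_pairs_of_perm: "j < 2 * m \<Longrightarrow> pair_seq (pairs_of_perm m p) j = p j"
  by (cases "even j") (auto simp: pair_seq_def pairs_of_perm_def elim!: evenE oddE)

lemma pairs_of_perm_pair_seq:
  "h \<in> PiE {0..<m} B \<Longrightarrow> pairs_of_perm m (pair_seq h) = h"
  by (intro ext) (auto simp: pairs_of_perm_def PiE_def extensional_def)

lemma pair_seq_image:
  assumes "h \<in> PiE {0..<m} (\<lambda>_. {0..<n} \<times> {0..<n})"
  shows "pair_seq h ` {0..<2 * m} \<subseteq> {0..<n}"
proof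
  fix x assume "x \<in> pair_seq h ` {0..<2 * m}"
  then obtain j where "j < 2 * m" "x = pair_seq h j" by auto
  moreover have "h (j div 2) \<in> {0..<n} \<times> {0..<n}"
    using assms \<open>j < 2 * m\<close> by (auto simp: PiE_def Pi_def)
  ultimately show "x \<in> {0..<n}"
    by (auto simp: pair_seq_def)
qed

lemma id_outside_pair_seq_pairs_of_perm:
  assumes "p permutes {0..<2 * m}"
  shows "id_outside (2 * m) (pair_seq (pairs_of_perm m p)) = p"
  using permutes_not_in[OF assms] by (intro ext) (simp add: id_outside_def pair_seq_pairs_of_perm)

lemma bij_betw_pairs_of_perm:
  "bij_betw (pairs_of_perm m) {p. p permutes {0..<2 * m}}
     {h \<in> PiE {0..<m} (\<lambda>_. {0..<2 * m} \<times> {0..<2 * m}). inj_on (pair_seq h) {0..<2 * m}}"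
proof (rule bij_betw_byWitness[where f' = "\<lambda>h. id_outside (2 * m) (pair_seq h)"])
  let ?H = "{h \<in> PiE {0..<m} (\<lambda>_. {0..<2 * m} \<times> {0..<2 * m}). inj_on (pair_seq h) {0..<2 * m}}"
  show "\<forall>p \<in> {p. p permutes {0..<2 * m}}. id_outside (2 * m) (pair_seq (pairs_of_perm m p)) = p"
    by (simp add: id_outside_pair_seq_pairs_of_perm)
  show "\<forall>h \<in> ?H. pairs_of_perm m (id_outside (2 * m) (pair_seq h)) = h"
  proof
    fix h assume "h \<in> ?H"
    have "pairs_of_perm m (id_outside (2 * m) (pair_seq h)) = pairs_of_perm m (pair_seq h)"
      by (intro ext) (simp add: pairs_of_perm_def id_outside_def)
    also have "\<dots> = h"
      using \<open>h \<in> ?H\<close> pairs_of_perm_pair_seq[of h m] by blast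
    finally show "pairs_of_perm m (id_outside (2 * m) (pair_seq h)) = h" .
  qed
  show "pairs_of_perm m ` {p. p permutes {0..<2 * m}} \<subseteq> ?H"
  proof (intro image_subsetI CollectI conjI)
    fix p assume "p \<in> {p. p permutes {0..<2 * m}}"
    then have p: "p permutes {0..<2 * m}" by simp
    have "p (2 * i) < 2 * m \<and> p (2 * i + 1) < 2 * m" if "i < m" for i
      using that permutes_in_image[OF p] by simp
    then show "pairs_of_perm m p \<in> PiE {0..<m} (\<lambda>_. {0..<2 * m} \<times> {0..<2 * m})"
      by (auto simp: pairs_of_perm_def PiE_def extensional_def)
    have "inj_on (pair_seq (pairs_of_perm m p)) {0..<2 * m} = inj_on p {0..<2 * m}"
      by (intro inj_on_cong) (simp add: pair_seq_pairs_of_perm)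
    then show "inj_on (pair_seq (pairs_of_perm m p)) {0..<2 * m}"
      using permutes_inj_on[OF p] by simp
  qed
  show "(\<lambda>h. id_outside (2 * m) (pair_seq h)) ` ?H \<subseteq> {p. p permutes {0..<2 * m}}"
  proof (intro image_subsetI CollectI)
    fix h assume "h \<in> ?H"
    then show "id_outside (2 * m) (pair_seq h) permutes {0..<2 * m}"
      by (intro id_outside_permutes pair_seq_image) simp_all
  qed
qed

lemma sum_permutes_pairs_det:
  fixes M a :: "nat \<Rightarrow> nat \<Rightarrow> real"
  shows "(\<Sum>p \<in> {p. p permutes {0..<2 * m}}. signof p *
      (\<Prod>i = 0..<m. case h i of (l, k) \<Rightarrow> M (p (2 * i)) l * a l k * M (p (2 * i + 1)) k)) =
    (\<Prod>i = 0..<m. case h i of (l, k) \<Rightarrow> a l k) * det (mat (2 * m) (2 * m) (\<lambda>(r, c). M r (pair_seq h c)))"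
proof -
  let ?A = "mat (2 * m) (2 * m) (\<lambda>(r, c). M r (pair_seq h c))"
  have "(\<Prod>i = 0..<m. case h i of (l, k) \<Rightarrow> M (p (2 * i)) l * a l k * M (p (2 * i + 1)) k) =
      (\<Prod>i = 0..<m. case h i of (l, k) \<Rightarrow> a l k) * (\<Prod>j<2 * m. ?A $$ (p j, j))"
    if p: "p permutes {0..<2 * m}" for p
  proof -
    have "?A $$ (p j, j) = M (p j) (pair_seq h j)" if "j < 2 * m" for j
      using that permutes_in_image[OF p, of j] by simp
    then have "(\<Prod>j<2 * m. ?A $$ (p j, j)) = (\<Prod>j = 0..<2 * m. M (p j) (pair_seq h j))"
      by (simp add: atLeast0LessThan)
    also have "\<dots> = (\<Prod>i = 0..<m. M (p (2 * i)) (fst (h i)) * M (p (2 * i + 1)) (snd (h i)))"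
      by (simp flip: prod_pairs)
    finally have "(\<Prod>j<2 * m. ?A $$ (p j, j)) =
        (\<Prod>i = 0..<m. M (p (2 * i)) (fst (h i)) * M (p (2 * i + 1)) (snd (h i)))" .
    moreover have "(\<Prod>i = 0..<m. case h i of (l, k) \<Rightarrow> M (p (2 * i)) l * a l k * M (p (2 * i + 1)) k) =
        (\<Prod>i = 0..<m. (case h i of (l, k) \<Rightarrow> a l k) *
          (M (p (2 * i)) (fst (h i)) * M (p (2 * i + 1)) (snd (h i))))"
      by (intro prod.cong refl) (simp add: split_beta)
    ultimately show ?thesis
      by (simp only: prod.distrib)
  qed
  then show ?thesis
    unfolding det_col[of ?A "2 * m", OF mat_carrier] sum_distrib_left
    by (intro sum.cong refl) simp
qed

lemma pfaffian_sum_eq_sum_pairings: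
  "pfaffian_sum m a =
    (\<Sum>h \<in> {h \<in> PiE {0..<m} (\<lambda>_. {0..<2 * m} \<times> {0..<2 * m}). inj_on (pair_seq h) {0..<2 * m}}.
       signof (id_outside (2 * m) (pair_seq h)) * (\<Prod>i = 0..<m. case h i of (l, k) \<Rightarrow> a l k))"
proof -
  let ?P = "{p. p permutes {0..<2 * m}}"
  let ?H = "{h \<in> PiE {0..<m} (\<lambda>_. {0..<2 * m} \<times> {0..<2 * m}). inj_on (pair_seq h) {0..<2 * m}}"
  let ?g = "\<lambda>h. signof (id_outside (2 * m) (pair_seq h)) * (\<Prod>i = 0..<m. case h i of (l, k) \<Rightarrow> a l k)"
  have "(\<Sum>h \<in> ?H. ?g h) = (\<Sum>p \<in> ?P. ?g (pairs_of_perm m p))"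
    by (rule sum.reindex_bij_betw [OF bij_betw_pairs_of_perm, symmetric])
  also have "\<dots> = pfaffian_sum m a"
    unfolding pfaffian_sum_def
  proof (intro sum.cong refl)
    fix p assume "p \<in> ?P"
    then have "id_outside (2 * m) (pair_seq (pairs_of_perm m p)) = p"
      by (simp add: id_outside_pair_seq_pairs_of_perm)
    moreover have "(\<Prod>i = 0..<m. case pairs_of_perm m p i of (l, k) \<Rightarrow> a l k) =
        (\<Prod>i = 0..<m. a (p (2 * i)) (p (2 * i + 1)))"
      by (intro prod.cong refl) (simp add: pairs_of_perm_def)
    ultimately show "?g (pairs_of_perm m p) = signof p * (\<Prod>i = 0..<m. a (p (2 * i)) (p (2 * i + 1)))"
      by simp
  qed
  finally show ?thesis
    by (rule sym)
qed

text \<open>Expanding every entry of \<open>M A M\<^sup>T\<close> turns the Pfaffian into a sum over sequences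
  \<open>h\<close> of index pairs. For fixed \<open>h\<close> the sum over permutations is the determinant of
  \<open>M\<close> with columns rearranged by \<open>pair_seq h\<close>; it vanishes unless \<open>pair_seq h\<close> is a
  permutation, and the remaining sum is the Pfaffian of \<open>A\<close> written over pairings.\<close>

lemma pfaffian_sum_congruence:
  fixes M a :: "nat \<Rightarrow> nat \<Rightarrow> real"
  shows "pfaffian_sum m (\<lambda>i j. \<Sum>(l, k) \<in> {0..<2 * m} \<times> {0..<2 * m}. M i l * a l k * M j k) =
    det (mat (2 * m) (2 * m) (\<lambda>(i, j). M i j)) * pfaffian_sum m a"
proof -
  let ?n = "2 * m"
  let ?P = "{p. p permutes {0..<?n}}"
  let ?PI = "PiE {0..<m} (\<lambda>_. {0..<?n} \<times> {0..<?n})"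
  let ?a = "\<lambda>h. \<Prod>i = 0..<m. case h i of (l, k) \<Rightarrow> a l k"
  let ?F = "\<lambda>p i (l, k). M (p (2 * i)) l * a l k * M (p (2 * i + 1)) k"
  let ?detM = "det (mat ?n ?n (\<lambda>(i, j). M i j))"
  have "pfaffian_sum m (\<lambda>i j. \<Sum>(l, k) \<in> {0..<?n} \<times> {0..<?n}. M i l * a l k * M j k) =
      (\<Sum>p \<in> ?P. signof p * (\<Prod>i = 0..<m. \<Sum>lk \<in> {0..<?n} \<times> {0..<?n}. ?F p i lk))"
    unfolding pfaffian_sum_def by simp
  also have "\<dots> = (\<Sum>p \<in> ?P. signof p * (\<Sum>h \<in> ?PI. \<Prod>i = 0..<m. ?F p i (h i)))"
    by (intro sum.cong refl arg_cong2[where f = "(*)"] prod_sum_PiE) auto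
  also have "\<dots> = (\<Sum>h \<in> ?PI. \<Sum>p \<in> ?P. signof p * (\<Prod>i = 0..<m. ?F p i (h i)))"
    unfolding sum_distrib_left by (rule sum.swap)
  also have "\<dots> = (\<Sum>h \<in> ?PI. ?a h * det (mat ?n ?n (\<lambda>(r, c). M r (pair_seq h c))))"
    by (intro sum.cong refl) (rule sum_permutes_pairs_det)
  also have "\<dots> = (\<Sum>h \<in> ?PI. ?detM * (if inj_on (pair_seq h) {0..<?n}
      then signof (id_outside ?n (pair_seq h)) * ?a h else 0))"
  proof (intro sum.cong refl)
    fix h assume "h \<in> ?PI"
    from det_mat_reindex_columns[OF pair_seq_image[OF this], of M] show
      "?a h * det (mat ?n ?n (\<lambda>(r, c). M r (pair_seq h c))) = ?detM * (if inj_on (pair_seq h) {0..<?n}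
         then signof (id_outside ?n (pair_seq h)) * ?a h else 0)"
      by simp
  qed
  also have "\<dots> = ?detM * pfaffian_sum m a"
    unfolding pfaffian_sum_eq_sum_pairings[of m a] sum_distrib_left [symmetric]
    by (simp add: sum.inter_filter finite_PiE)
  finally show ?thesis .
qed

lemma pfaffian_congruence:
  assumes M: "M \<in> carrier_mat (2 * m) (2 * m)" and A: "A \<in> carrier_mat (2 * m) (2 * m)"
  shows "pfaffian (M * A * transpose_mat M) = det M * pfaffian A"
proof -
  let ?K = "{0..<2 * m} \<times> {0..<2 * m}"
  have entry: "(M * A * transpose_mat M) $$ (i, j) =
      (\<Sum>(l, k) \<in> ?K. M $$ (i, l) * A $$ (l, k) * M $$ (j, k))"
    if "i < 2 * m" "j < 2 * m" for i j
  proof -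
    have "(M * A * transpose_mat M) $$ (i, j) =
        (\<Sum>l = 0..<2 * m. M $$ (i, l) * (\<Sum>k = 0..<2 * m. A $$ (l, k) * M $$ (j, k)))"
      using M A that by (simp add: scalar_prod_def)
    also have "\<dots> = (\<Sum>(l, k) \<in> ?K. M $$ (i, l) * A $$ (l, k) * M $$ (j, k))"
      by (simp add: sum_distrib_left sum.cartesian_product mult.assoc)
    finally show ?thesis .
  qed
  have "mat (2 * m) (2 * m) (\<lambda>(i, j). M $$ (i, j)) = M"
    using M by (intro eq_matI) auto
  then have "pfaffian_sum m (\<lambda>i j. (M * A * transpose_mat M) $$ (i, j)) =
      det M * pfaffian_sum m (\<lambda>i j. A $$ (i, j))"
    using pfaffian_sum_congruence[of m "\<lambda>i j. M $$ (i, j)" "\<lambda>i j. A $$ (i, j)"]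
    by (simp add: entry cong: pfaffian_sum_cong)
  moreover have "M * A * transpose_mat M \<in> carrier_mat (2 * m) (2 * m)"
    using M A by simp
  ultimately show ?thesis
    using A by (simp only: pfaffian_eq_pfaffian_sum) simp
qed

lemma pfaffian_four_block_diag:
  assumes X: "X \<in> carrier_mat (2 * a) (2 * a)" and Y: "Y \<in> carrier_mat (2 * b) (2 * b)"
  shows "pfaffian (four_block_mat X (0\<^sub>m (2 * a) (2 * b)) (0\<^sub>m (2 * b) (2 * a)) Y) =
    pfaffian X * pfaffian Y"
proof -
  let ?F = "four_block_mat X (0\<^sub>m (2 * a) (2 * b)) (0\<^sub>m (2 * b) (2 * a)) Y"
  have F: "?F \<in> carrier_mat (2 * (a + b)) (2 * (a + b))"
    using four_block_carrier_mat[OF X Y] by (simp add: algebra_simps)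
  have "pfaffian_sum (a + b) (\<lambda>i j. ?F $$ (i, j)) =
      pfaffian_sum (a + b) (block_diag_fun (\<lambda>i j. X $$ (i, j)) (\<lambda>i j. Y $$ (i, j)) (2 * a))"
    using X Y by (intro pfaffian_sum_cong) (auto simp: block_diag_fun_def)
  also have "\<dots> = real ((a + b) choose a) *
      pfaffian_sum a (\<lambda>i j. X $$ (i, j)) * pfaffian_sum b (\<lambda>i j. Y $$ (i, j))"
    by (rule pfaffian_sum_block_diag)
  finally have "pfaffian_sum (a + b) (\<lambda>i j. ?F $$ (i, j)) = \<dots>" .
  moreover have "real ((a + b) choose a) * fact a * fact b = fact (a + b)"
  proof -
    have "fact a * fact b * ((a + b) choose a) = (fact (a + b) :: nat)"
      using binomial_fact_lemma[of a "a + b"] by simp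
    then have "real (fact a * fact b * ((a + b) choose a)) = real (fact (a + b))"
      by (rule arg_cong)
    then show ?thesis
      by (simp add: ac_simps)
  qed
  ultimately show ?thesis
    unfolding pfaffian_eq_pfaffian_sum[OF F] pfaffian_eq_pfaffian_sum[OF X]
      pfaffian_eq_pfaffian_sum[OF Y]
    by (simp add: power_add field_simps)
qed

lemma pfaffian_smult:
  assumes A: "A \<in> carrier_mat (2 * m) (2 * m)"
  shows "pfaffian (c \<cdot>\<^sub>m A) = c ^ m * pfaffian A"
proof -
  have "pfaffian_sum m (\<lambda>i j. (c \<cdot>\<^sub>m A) $$ (i, j)) = pfaffian_sum m (\<lambda>i j. c * A $$ (i, j))"
    using A by (intro pfaffian_sum_cong) simp
  moreover have "c \<cdot>\<^sub>m A \<in> carrier_mat (2 * m) (2 * m)"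
    using A by simp
  ultimately show ?thesis
    using A by (simp only: pfaffian_eq_pfaffian_sum pfaffian_sum_scale) simp
qed

definition interleave :: "nat \<Rightarrow> nat \<Rightarrow> nat" where
  "interleave N r = (if r < N then 2 * r else if r < 2 * N then 2 * (r - N) + 1 else r)"

lemma interleave_permutes: "interleave N permutes {0..<2 * N}"
proof (rule bij_imp_permutes)
  have "inj_on (interleave N) {0..<2 * N}"
    by (intro inj_onI) (auto simp: interleave_def split: if_splits; presburger)
  moreover have "interleave N ` {0..<2 * N} \<subseteq> {0..<2 * N}"
    by (auto simp: interleave_def)
  ultimately show "bij_betw (interleave N) {0..<2 * N} {0..<2 * N}"
    by (simp add: bij_betw_def endo_inj_surj)
qed (simp add: interleave_def)

definition symplectic_mat :: "nat \<Rightarrow> real mat" where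
  "symplectic_mat N = four_block_mat (0\<^sub>m N N) (1\<^sub>m N) (- 1\<^sub>m N) (0\<^sub>m N N)"

lemma symplectic_mat_carrier: "symplectic_mat N \<in> carrier_mat (2 * N) (2 * N)"
  unfolding symplectic_mat_def mult_2 by (rule four_block_carrier_mat) auto

lemma symplectic_mat_entry:
  assumes "r < 2 * N" "c < 2 * N"
  shows "symplectic_mat N $$ (r, c) = std_symplectic_fun (interleave N r) (interleave N c)"
  using assms by (auto simp: symplectic_mat_def interleave_def std_symplectic_fun_def; presburger)

lemma pfaffian_symplectic_mat: "pfaffian (symplectic_mat N) = signof (interleave N)"
proof -
  have "pfaffian_sum N (\<lambda>i j. symplectic_mat N $$ (i, j)) =
      pfaffian_sum N (\<lambda>i j. std_symplectic_fun (interleave N i) (interleave N j))"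
    by (intro pfaffian_sum_cong symplectic_mat_entry)
  also have "\<dots> = signof (interleave N) * (2 ^ N * fact N)"
    by (simp add: pfaffian_sum_permute interleave_permutes pfaffian_sum_std_symplectic_fun)
  finally show ?thesis
    by (simp add: pfaffian_eq_pfaffian_sum[OF symplectic_mat_carrier])
qed

lemma four_block_symplectic_congruence:
  assumes S: "S \<in> carrier_mat N N" and skew: "skew_symmetric S"
  shows "four_block_mat S (1\<^sub>m N) S (- 1\<^sub>m N) * symplectic_mat N *
      transpose_mat (four_block_mat S (1\<^sub>m N) S (- 1\<^sub>m N)) =
    four_block_mat (2 \<cdot>\<^sub>m S) (0\<^sub>m N N) (0\<^sub>m N N) ((-2) \<cdot>\<^sub>m S)"
proof -
  have [simp]: "transpose_mat S = - S"
    using skew by (simp add: skew_symmetric_def)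
  have "four_block_mat S (1\<^sub>m N) S (- 1\<^sub>m N) * symplectic_mat N = four_block_mat (- 1\<^sub>m N) S (1\<^sub>m N) S"
    unfolding symplectic_mat_def using S
    by (subst mult_four_block_mat[of _ N N _ N _ N _ _ N _ N]) (auto intro!: cong_four_block_mat eq_matI)
  moreover have "transpose_mat (four_block_mat S (1\<^sub>m N) S (- 1\<^sub>m N)) =
      four_block_mat (- S) (- S) (1\<^sub>m N) (- 1\<^sub>m N)"
    using S by (subst transpose_four_block_mat[of _ N N]) (auto simp: transpose_uminus)
  moreover have "four_block_mat (- 1\<^sub>m N) S (1\<^sub>m N) S * four_block_mat (- S) (- S) (1\<^sub>m N) (- 1\<^sub>m N) =
      four_block_mat (2 \<cdot>\<^sub>m S) (0\<^sub>m N N) (0\<^sub>m N N) ((-2) \<cdot>\<^sub>m S)"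
    using S by (subst mult_four_block_mat[of _ N N _ N _ N _ _ N _ N])
      (auto intro!: cong_four_block_mat eq_matI)
  ultimately show ?thesis
    by simp
qed

text \<open>The sign \<open>(-1)^k * signof (interleave (2 * k))\<close> is in fact \<open>1\<close>, but only its
  nonvanishing is needed.\<close>

lemma pfaffian_square:
  assumes S: "S \<in> carrier_mat (2 * k) (2 * k)" and skew: "skew_symmetric S"
  shows "(-1) ^ k * pfaffian S ^ 2 = signof (interleave (2 * k)) * det S"
proof -
  define N where "N = 2 * k"
  define E where "E = four_block_mat S (1\<^sub>m N) S (- 1\<^sub>m N)"
  have S': "S \<in> carrier_mat N N" using S by (simp add: N_def)
  have E: "E \<in> carrier_mat (2 * N) (2 * N)"
    unfolding E_def mult_2 using S' by (intro four_block_carrier_mat) auto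
  have "det E = det (S * (- 1\<^sub>m N) - 1\<^sub>m N * S)"
    unfolding E_def using S' by (intro det_four_block_mat) auto
  also have "S * (- 1\<^sub>m N) - 1\<^sub>m N * S = (-2) \<cdot>\<^sub>m S"
    using S' by (intro eq_matI) auto
  finally have det_E: "det E = 4 ^ k * det S"
    using S' by (simp add: N_def power_mult)
  have "det E * signof (interleave N) = pfaffian (E * symplectic_mat N * transpose_mat E)"
    using pfaffian_congruence[OF E symplectic_mat_carrier] by (simp add: pfaffian_symplectic_mat)
  also have "E * symplectic_mat N * transpose_mat E =
      four_block_mat (2 \<cdot>\<^sub>m S) (0\<^sub>m N N) (0\<^sub>m N N) ((-2) \<cdot>\<^sub>m S)"
    unfolding E_def by (rule four_block_symplectic_congruence[OF S' skew])
  also have "pfaffian \<dots> = pfaffian (2 \<cdot>\<^sub>m S) * pfaffian ((-2) \<cdot>\<^sub>m S)"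
    unfolding N_def using S by (intro pfaffian_four_block_diag) auto
  also have "\<dots> = (-4) ^ k * pfaffian S ^ 2"
    using S by (simp add: pfaffian_smult power2_eq_square power_mult_distrib[symmetric])
  finally have "(-4) ^ k * pfaffian S ^ 2 = 4 ^ k * signof (interleave N) * det S"
    by (simp add: det_E ac_simps)
  moreover have "(-4 :: real) ^ k = (-1) ^ k * 4 ^ k"
    by (simp flip: power_mult_distrib)
  ultimately show ?thesis
    by (simp add: N_def)
qed

lemma pfaffian_eq_0_iff_det_eq_0:
  assumes "S \<in> carrier_mat (2 * k) (2 * k)" and "skew_symmetric S"
  shows "pfaffian S = 0 \<longleftrightarrow> det S = 0"
  using pfaffian_square[OF assms] signof_pm_one[of "interleave (2 * k)", where 'a = real] by auto

lemma continuous_on_pfaffian: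
  assumes "\<And>x. x \<in> T \<Longrightarrow> A x \<in> carrier_mat (2 * m) (2 * m)"
    and "\<And>i j. i < 2 * m \<Longrightarrow> j < 2 * m \<Longrightarrow> continuous_on T (\<lambda>x. A x $$ (i, j))"
  shows "continuous_on T (\<lambda>x. pfaffian (A x))"
proof -
  have "p (2 * i) < 2 * m" "p (2 * i + 1) < 2 * m" if "p permutes {0..<2 * m}" "i < m" for p i
    using that permutes_in_image[of p "{0..<2 * m}"] by auto
  then have "continuous_on T (\<lambda>x. pfaffian_sum m (\<lambda>i j. A x $$ (i, j)) / (2 ^ m * fact m))"
    unfolding pfaffian_sum_def by (intro continuous_intros assms) auto
  moreover have "continuous_on T (\<lambda>x. pfaffian (A x)) \<longleftrightarrow>
      continuous_on T (\<lambda>x. pfaffian_sum m (\<lambda>i j. A x $$ (i, j)) / (2 ^ m * fact m))"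
    by (intro continuous_on_cong refl) (simp add: assms pfaffian_eq_pfaffian_sum)
  ultimately show ?thesis by simp
qed

section \<open>Orthogonal skew-symmetric matrices\<close>

lemma skew_symmetric_entry:
  assumes "A \<in> carrier_mat n n" "skew_symmetric A" "i < n" "j < n"
  shows "A $$ (j, i) = - A $$ (i, j)"
proof -
  have "A $$ (j, i) = transpose_mat A $$ (i, j)" using assms by simp
  also have "\<dots> = - A $$ (i, j)" using assms by (simp add: skew_symmetric_def)
  finally show ?thesis .
qed

lemma skew_symmetric_lincomb:
  assumes "P \<in> carrier_mat n n" "Q \<in> carrier_mat n n" "skew_symmetric P" "skew_symmetric Q"
  shows "skew_symmetric (a \<cdot>\<^sub>m P + b \<cdot>\<^sub>m Q)"
  unfolding skew_symmetric_def
proof (rule eq_matI)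
  fix i j assume "i < dim_row (- (a \<cdot>\<^sub>m P + b \<cdot>\<^sub>m Q))" "j < dim_col (- (a \<cdot>\<^sub>m P + b \<cdot>\<^sub>m Q))"
  with assms show "transpose_mat (a \<cdot>\<^sub>m P + b \<cdot>\<^sub>m Q) $$ (i, j) = (- (a \<cdot>\<^sub>m P + b \<cdot>\<^sub>m Q)) $$ (i, j)"
    using skew_symmetric_entry[OF assms(1,3), of i j] skew_symmetric_entry[OF assms(2,4), of i j] by simp
qed (use assms in simp_all)

lemma orthogonal_mult_vec_norm:
  fixes P :: "real mat"
  assumes P: "P \<in> carrier_mat n n" and PP: "transpose_mat P * P = 1\<^sub>m n" and v: "v \<in> carrier_vec n"
  shows "(P *\<^sub>v v) \<bullet> (P *\<^sub>v v) = v \<bullet> v"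
proof -
  have "(P *\<^sub>v v) \<bullet> (P *\<^sub>v v) = (transpose_mat P *\<^sub>v (P *\<^sub>v v)) \<bullet> v"
    using transpose_vec_mult_scalar[OF P v, of "P *\<^sub>v v"] P v by simp
  also have "transpose_mat P *\<^sub>v (P *\<^sub>v v) = v"
    using P v by (simp flip: assoc_mult_mat_vec add: PP)
  finally show ?thesis .
qed

lemma scalar_prod_self_eq_0:
  fixes v :: "real vec"
  assumes "v \<in> carrier_vec n" and "v \<bullet> v = 0"
  shows "v = 0\<^sub>v n"
proof -
  have "(\<Sum>i = 0..<n. v $ i * v $ i) = 0" using assms by (simp add: scalar_prod_def)
  then have "\<forall>i \<in> {0..<n}. v $ i * v $ i = 0" by (subst sum_nonneg_eq_0_iff [symmetric]) auto
  then show ?thesis using assms(1) by (intro eq_vecI) auto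
qed

lemma scalar_prod_self_scale:
  fixes w :: "real vec"
  assumes "w \<in> carrier_vec n"
  shows "c\<^sup>2 * (w \<bullet> w) = (\<Sum>i = 0..<n. (c * w $ i)\<^sup>2)"
  using assms by (simp add: scalar_prod_def sum_distrib_left power2_eq_square ac_simps)

lemma det_orthogonal_lincomb_nonzero:
  fixes P Q :: "real mat"
  assumes P: "P \<in> carrier_mat n n" and Q: "Q \<in> carrier_mat n n"
    and PP: "transpose_mat P * P = 1\<^sub>m n" and QQ: "transpose_mat Q * Q = 1\<^sub>m n"
    and ab: "a\<^sup>2 \<noteq> b\<^sup>2"
  shows "det (a \<cdot>\<^sub>m P + b \<cdot>\<^sub>m Q) \<noteq> 0"
proof
  assume "det (a \<cdot>\<^sub>m P + b \<cdot>\<^sub>m Q) = 0"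
  then obtain v where v: "v \<in> carrier_vec n" "v \<noteq> 0\<^sub>v n"
    and kernel: "(a \<cdot>\<^sub>m P + b \<cdot>\<^sub>m Q) *\<^sub>v v = 0\<^sub>v n"
    using P Q det_0_iff_vec_prod_zero_field[of "a \<cdot>\<^sub>m P + b \<cdot>\<^sub>m Q" n] by auto
  have comp: "a * (P *\<^sub>v v) $ i = - (b * (Q *\<^sub>v v) $ i)" if "i < n" for i
  proof -
    have "0 = ((a \<cdot>\<^sub>m P + b \<cdot>\<^sub>m Q) *\<^sub>v v) $ i"
      using kernel that by simp
    also have "\<dots> = a * (P *\<^sub>v v) $ i + b * (Q *\<^sub>v v) $ i"
      using that P Q v(1)
      by (simp add: scalar_prod_def sum_distrib_left sum.distrib distrib_right mult.assoc)
    finally show ?thesis by linarith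
  qed
  have "a\<^sup>2 * (v \<bullet> v) = a\<^sup>2 * ((P *\<^sub>v v) \<bullet> (P *\<^sub>v v))"
    using orthogonal_mult_vec_norm[OF P PP v(1)] by simp
  also have "\<dots> = (\<Sum>i = 0..<n. (a * (P *\<^sub>v v) $ i)\<^sup>2)"
    using P v(1) by (intro scalar_prod_self_scale) simp
  also have "\<dots> = (\<Sum>i = 0..<n. (b * (Q *\<^sub>v v) $ i)\<^sup>2)"
    by (intro sum.cong refl) (simp add: comp)
  also have "\<dots> = b\<^sup>2 * ((Q *\<^sub>v v) \<bullet> (Q *\<^sub>v v))"
    using Q v(1) by (intro scalar_prod_self_scale [symmetric]) simp
  also have "\<dots> = b\<^sup>2 * (v \<bullet> v)"
    using orthogonal_mult_vec_norm[OF Q QQ v(1)] by simp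
  finally have "(a\<^sup>2 - b\<^sup>2) * (v \<bullet> v) = 0"
    by (simp add: algebra_simps)
  with ab v show False
    using scalar_prod_self_eq_0 by auto
qed

lemma pfaffian_mult_pfaffian_add_nonneg:
  fixes P Q :: "real mat"
  assumes P: "P \<in> carrier_mat (2 * m) (2 * m)" and Q: "Q \<in> carrier_mat (2 * m) (2 * m)"
    and skew: "skew_symmetric P" "skew_symmetric Q"
    and PP: "transpose_mat P * P = 1\<^sub>m (2 * m)" and QQ: "transpose_mat Q * Q = 1\<^sub>m (2 * m)"
  shows "0 \<le> pfaffian P * pfaffian (P + Q)"
proof (rule ccontr)
  define g where "g t = pfaffian (1 \<cdot>\<^sub>m P + t \<cdot>\<^sub>m Q)" for t
  have g_nonzero: "g t \<noteq> 0" if "t\<^sup>2 \<noteq> 1" for t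
  proof -
    have "det (1 \<cdot>\<^sub>m P + t \<cdot>\<^sub>m Q) \<noteq> 0"
      using that by (intro det_orthogonal_lincomb_nonzero[OF P Q PP QQ]) simp
    then show ?thesis
      unfolding g_def using P Q skew
      by (subst pfaffian_eq_0_iff_det_eq_0) (auto intro: skew_symmetric_lincomb)
  qed
  have "continuous_on {0..1} g"
    unfolding g_def using P Q
    by (intro continuous_on_pfaffian[where m = m]) (auto intro!: continuous_intros)
  then have cont: "continuous_on {0..1} (\<lambda>t. g 0 * g t)"
    by (intro continuous_intros)
  have "1 \<cdot>\<^sub>m P + 0 \<cdot>\<^sub>m Q = P" "1 \<cdot>\<^sub>m P + 1 \<cdot>\<^sub>m Q = P + Q"
    using P Q by (auto intro!: eq_matI)
  then have "g 0 = pfaffian P" "g 1 = pfaffian (P + Q)"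
    by (simp_all add: g_def)
  moreover assume "\<not> 0 \<le> pfaffian P * pfaffian (P + Q)"
  ultimately have "g 0 * g 1 \<le> 0" "0 \<le> g 0 * g 0"
    by auto
  then obtain t where t: "0 \<le> t" "t \<le> 1" "g 0 * g t = 0"
    using IVT2'[of "\<lambda>t. g 0 * g t" 1 0 0, OF _ _ _ cont] by auto
  moreover have "t \<noteq> 1"
    using t \<open>\<not> 0 \<le> pfaffian P * pfaffian (P + Q)\<close> \<open>g 0 = pfaffian P\<close> \<open>g 1 = pfaffian (P + Q)\<close> by auto
  ultimately have "t\<^sup>2 \<noteq> 1"
    by (simp add: abs_square_eq_1)
  with t g_nonzero[of 0] g_nonzero[of t] show False
    by simp
qed

lemma skew_symmetric_det_odd:
  assumes A: "A \<in> carrier_mat n n" and "skew_symmetric A" and "odd n"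
  shows "det A = 0"
proof -
  have "det A = det (transpose_mat A)"
    using A by (simp add: det_transpose)
  also have "transpose_mat A = (-1) \<cdot>\<^sub>m A"
    using assms(2) A by (auto simp: skew_symmetric_def intro!: eq_matI)
  finally show ?thesis
    using A \<open>odd n\<close> by simp
qed

lemma skew_symmetric_uminus: "skew_symmetric A \<Longrightarrow> skew_symmetric (- A)"
  by (simp add: skew_symmetric_def transpose_uminus)

lemma skew_symmetric_four_block_mat:
  assumes A: "A \<in> carrier_mat n n" and B: "B \<in> carrier_mat n n"
    and "skew_symmetric A" "skew_symmetric B"
  shows "skew_symmetric (four_block_mat A B B A)"
proof -
  have "transpose_mat (four_block_mat A B B A) = four_block_mat (- A) (- B) (- B) (- A)"
    using assms by (simp add: transpose_four_block_mat[OF A B B A] skew_symmetric_def)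
  also have "\<dots> = - four_block_mat A B B A"
    using A B by (intro eq_matI) auto
  finally show ?thesis
    by (simp add: skew_symmetric_def)
qed

lemma orthogonal_mult:
  fixes A B :: "real mat"
  assumes A: "A \<in> carrier_mat n n" and B: "B \<in> carrier_mat n n"
    and AA: "transpose_mat A * A = 1\<^sub>m n" and BB: "transpose_mat B * B = 1\<^sub>m n"
  shows "transpose_mat (A * B) * (A * B) = 1\<^sub>m n"
proof -
  have "transpose_mat (A * B) * (A * B) = transpose_mat B * ((transpose_mat A * A) * B)"
    using A B by (simp add: transpose_mult[OF A B] assoc_mult_mat[of _ n n _ n _ n])
  also have "\<dots> = 1\<^sub>m n"
    using B by (simp add: AA BB)
  finally show ?thesis .
qed

definition flip_mat :: "nat \<Rightarrow> real mat" where
  "flip_mat n = four_block_mat (1\<^sub>m n) (0\<^sub>m n n) (0\<^sub>m n n) (- 1\<^sub>m n)"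

lemma flip_mat_carrier: "flip_mat n \<in> carrier_mat (2 * n) (2 * n)"
  unfolding flip_mat_def mult_2 by (rule four_block_carrier_mat) auto

lemma flip_mat_orthogonal: "transpose_mat (flip_mat n) * flip_mat n = 1\<^sub>m (2 * n)"
proof -
  have "transpose_mat (flip_mat n) = flip_mat n"
    unfolding flip_mat_def by (subst transpose_four_block_mat) (auto simp: transpose_uminus)
  moreover have "flip_mat n * flip_mat n = four_block_mat (1\<^sub>m n) (0\<^sub>m n n) (0\<^sub>m n n) (1\<^sub>m n)"
    unfolding flip_mat_def
    by (subst mult_four_block_mat[of _ n n _ n _ n _ _ n _ n]) (auto intro!: cong_four_block_mat eq_matI)
  ultimately show ?thesis
    by (simp add: mult_2)
qed

lemma flip_mat_conj_four_block_mat: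
  assumes "A \<in> carrier_mat n n" "B \<in> carrier_mat n n" "C \<in> carrier_mat n n" "D \<in> carrier_mat n n"
  shows "flip_mat n * four_block_mat A B C D * flip_mat n = four_block_mat A (- B) (- C) D"
proof -
  have "flip_mat n * four_block_mat A B C D = four_block_mat A B (- C) (- D)"
    unfolding flip_mat_def using assms
    by (subst mult_four_block_mat[of _ n n _ n _ n _ _ n _ n]) (auto intro!: cong_four_block_mat eq_matI)
  then show ?thesis
    unfolding flip_mat_def using assms
    by (simp, subst mult_four_block_mat[of _ n n _ n _ n _ _ n _ n])
      (auto intro!: cong_four_block_mat eq_matI)
qed

lemma unitary_real_imp_orthogonal:
  assumes "unitary_real R" and R: "R \<in> carrier_mat N N"
  shows "transpose_mat R * R = 1\<^sub>m N"
proof -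
  obtain k where "R \<in> carrier_mat k k" "R * transpose_mat R = 1\<^sub>m k"
    using assms(1) unfolding unitary_real_def by blast
  with R have "R * transpose_mat R = 1\<^sub>m N"
    by (metis carrier_matD(1))
  then show ?thesis
    using R by (intro mat_mult_left_right_inverse[OF R]) simp_all
qed

lemma orthogonal_flip_mat_conj:
  assumes R: "R \<in> carrier_mat (2 * n) (2 * n)" and RR: "transpose_mat R * R = 1\<^sub>m (2 * n)"
  shows "transpose_mat (flip_mat n * R * flip_mat n) * (flip_mat n * R * flip_mat n) = 1\<^sub>m (2 * n)"
proof -
  have "transpose_mat (flip_mat n * R) * (flip_mat n * R) = 1\<^sub>m (2 * n)"
    by (rule orthogonal_mult[OF flip_mat_carrier R flip_mat_orthogonal RR])
  then show ?thesis
    using R flip_mat_carrier[of n]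
    by (intro orthogonal_mult[OF _ flip_mat_carrier _ flip_mat_orthogonal]) simp_all
qed

lemma pfaffian_four_block_add_flip:
  assumes Rd: "Rd \<in> carrier_mat (2 * k) (2 * k)" and Ro: "Ro \<in> carrier_mat (2 * k) (2 * k)"
  shows "pfaffian (four_block_mat Rd Ro Ro Rd + four_block_mat Rd (- Ro) (- Ro) Rd) =
    (2 ^ k * pfaffian Rd)\<^sup>2"
proof -
  have "four_block_mat Rd Ro Ro Rd + four_block_mat Rd (- Ro) (- Ro) Rd =
      four_block_mat (2 \<cdot>\<^sub>m Rd) (0\<^sub>m (2 * k) (2 * k)) (0\<^sub>m (2 * k) (2 * k)) (2 \<cdot>\<^sub>m Rd)"
    using Rd Ro by (subst add_four_block_mat[of _ "2 * k" "2 * k"])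
      (auto intro!: cong_four_block_mat eq_matI)
  also have "pfaffian \<dots> = pfaffian (2 \<cdot>\<^sub>m Rd) * pfaffian (2 \<cdot>\<^sub>m Rd)"
    using Rd by (intro pfaffian_four_block_diag) simp_all
  also have "\<dots> = (2 ^ k * pfaffian Rd)\<^sup>2"
    by (simp add: pfaffian_smult[OF Rd] power2_eq_square)
  finally show ?thesis .
qed

theorem theorem4:
  fixes n :: nat and Rd Ro :: "real mat"
  assumes "Rd \<in> carrier_mat n n" and "Ro \<in> carrier_mat n n"
    and "skew_symmetric Rd" and "skew_symmetric Ro"
    and "unitary_real (four_block_mat Rd Ro Ro Rd)"
    and "pfaffian (four_block_mat Rd Ro Ro Rd) = -1"
  shows "det Rd = 0"
proof (rule ccontr)
  assume det_Rd: "det Rd \<noteq> 0"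
  note Rd = assms(1) and Ro = assms(2)
  have "even n"
    using skew_symmetric_det_odd[OF Rd assms(3)] det_Rd by blast
  then obtain k where k: "n = 2 * k" ..
  define R where "R = four_block_mat Rd Ro Ro Rd"
  define E where "E = flip_mat n * R * flip_mat n"
  have R: "R \<in> carrier_mat (2 * n) (2 * n)"
    unfolding R_def mult_2 using Rd Ro by auto
  have E_blocks: "E = four_block_mat Rd (- Ro) (- Ro) Rd"
    unfolding E_def R_def by (rule flip_mat_conj_four_block_mat[OF Rd Ro Ro Rd])
  have RR: "transpose_mat R * R = 1\<^sub>m (2 * n)"
    using unitary_real_imp_orthogonal[OF assms(5)] R by (simp add: R_def)
  have "0 \<le> pfaffian R * pfaffian (R + E)"
  proof (rule pfaffian_mult_pfaffian_add_nonneg[OF R _ _ _ RR])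
    show "E \<in> carrier_mat (2 * n) (2 * n)"
      unfolding E_blocks mult_2 using Rd Ro by auto
    show "skew_symmetric R" "skew_symmetric E"
      unfolding R_def E_blocks using Rd Ro assms(3,4)
      by (auto intro!: skew_symmetric_four_block_mat skew_symmetric_uminus)
    show "transpose_mat E * E = 1\<^sub>m (2 * n)"
      unfolding E_def using R RR by (rule orthogonal_flip_mat_conj)
  qed
  moreover have "pfaffian (R + E) = (2 ^ k * pfaffian Rd)\<^sup>2"
    unfolding R_def E_blocks using Rd Ro k by (intro pfaffian_four_block_add_flip) simp_all
  moreover have "pfaffian Rd \<noteq> 0"
    using pfaffian_eq_0_iff_det_eq_0[of Rd k] Rd k assms(3) det_Rd by simp
  ultimately show False
    using assms(6) by (simp add: R_def)
qed

end
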